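(* Let $\mathcal{O}$ be the class of finite ordinal potential games, and let $\phi$ assign to each $\Gamma\in\mathcal{O}$ the set $\phi(\Gamma)$ of strongly maximal equilibria of $\Gamma$. Then $\phi$ satisfies: (i) existence: $\phi(\Gamma)\neq\emptyset$ for every $\Gamma\in\mathcal{O}$; (ii) one-person rationality: for every one-player game $\Gamma\in\mathcal{O}$, $\phi(\Gamma)$ is the set of strategies maximizing the player's payoff; (iii) consistency: for every $\Gamma=(I,(S_i),(u_i))\in\mathcal{O}$, every nonempty proper subset $J\subsetneq I$ and every $s^*\in\phi(\Gamma)$, the reduced game $\Gamma^{J,s^*}$ belongs to $\mathcal{O}$ and $s^*_J=(s^*_j)_{j\in J}\in\phi(\Gamma^{J,s^*})$.
   Context: A finite strategic-form game $\Gamma=(I,(S_i)_{i\in I},(u_i)_{i\in I})$ has finite player set $I$, finite nonempty strategy sets $S_i$, utilities $u_i:S\to\mathbb{R}$, $S=\prod_i S_i$; $(s_i',s_{-i})$ denotes $s$ with player $i$'s strategy replaced by $s_i'$. A pure Nash equilibrium is $s\in S$ with $u_i(s)\ge u_i(s_i',s_{-i})$ for all $i$ and $s_i'\in S_i$. A function $P:S\to\mathbb{R}$ is an ordinal potential if for all $i$, $a,b\in S_i$, $\sigma_{-i}\in S_{-i}$: $u_i(a,\sigma_{-i})>u_i(b,\sigma_{-i})\iff P(a,\sigma_{-i})>P(b,\sigma_{-i})$; $\Gamma$ is an ordinal potential game if one exists. The ordinal deployment graph has vertex set $S$ and an arc $(s,s')$, $s'\neq s$, iff $s'=(s_i',s_{-i})$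 for some $i$ with $u_i(s')\ge u_i(s)$. Define $s\succeq s'$ iff there is a directed path (possibly of length $0$) from $s'$ to $s$, and $s\succ s'$ iff $s\succeq s'$ and not $s'\succeq s$. A strongly maximal state is an $s^*$ with no $s$ satisfying $s\succ s^*$. Two states communicate if each is reachable from the other by a directed path. A strongly maximal equilibrium is a strongly maximal state $s$ such that every state communicating with $s$ (including $s$) is a pure Nash equilibrium. For a nonempty proper subset $J\subsetneq I$ and $s\in S$, the reduced game $\Gamma^{J,s}=(J,(S_j)_{j\in J},(w_j)_{j\in J})$ has player set $J$, the same strategy sets $S_j$, and payoffs $w_j(\sigma)=u_j(\sigma,s_{-J})$ for $\sigma\in\prod_{j\in J}S_j$, where $s_{-J}$ are the strategies of the players outside $J$ in $s$. *)

theory Defs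
  imports "HOL-Library.FuncSet" Complex_Main
begin

text \<open>A finite strategic-form game is given by a player set I, strategy sets S i (i in I)
and utilities u i defined on profiles.  Profiles are extensional functions in
PiE I S (value undefined outside I).\<close>

definition profiles :: "'p set \<Rightarrow> ('p \<Rightarrow> 's set) \<Rightarrow> ('p \<Rightarrow> 's) set" where
  "profiles I S = PiE I S"

definition finite_game :: "'p set \<Rightarrow> ('p \<Rightarrow> 's set) \<Rightarrow> bool" where
  "finite_game I S \<longleftrightarrow> finite I \<and> (\<forall>i\<in>I. finite (S i) \<and> S i \<noteq> {})"

definition is_pure_nash :: "'p set \<Rightarrow> ('p \<Rightarrow> 's set) \<Rightarrow> ('p \<Rightarrow> ('p \<Rightarrow> 's) \<Rightarrow> real) \<Rightarrow> ('p \<Rightarrow> 's) \<Rightarrow> bool" where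
  "is_pure_nash I S u s \<longleftrightarrow> s \<in> profiles I S \<and> (\<forall>i\<in>I. \<forall>a\<in>S i. u i (s(i := a)) \<le> u i s)"

definition ordinal_potential :: "'p set \<Rightarrow> ('p \<Rightarrow> 's set) \<Rightarrow> ('p \<Rightarrow> ('p \<Rightarrow> 's) \<Rightarrow> real) \<Rightarrow> (('p \<Rightarrow> 's) \<Rightarrow> real) \<Rightarrow> bool" where
  "ordinal_potential I S u P \<longleftrightarrow>
     (\<forall>i\<in>I. \<forall>a\<in>S i. \<forall>b\<in>S i. \<forall>\<sigma>\<in>profiles I S.
        u i (\<sigma>(i := a)) > u i (\<sigma>(i := b)) \<longleftrightarrow> P (\<sigma>(i := a)) > P (\<sigma>(i := b)))"

definition ordinal_potential_game :: "'p set \<Rightarrow> ('p \<Rightarrow> 's set) \<Rightarrow> ('p \<Rightarrow> ('p \<Rightarrow> 's) \<Rightarrow> real) \<Rightarrow> bool" where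
  "ordinal_potential_game I S u \<longleftrightarrow> finite_game I S \<and> (\<exists>P. ordinal_potential I S u P)"

definition deploy_arc :: "'p set \<Rightarrow> ('p \<Rightarrow> 's set) \<Rightarrow> ('p \<Rightarrow> ('p \<Rightarrow> 's) \<Rightarrow> real) \<Rightarrow> ('p \<Rightarrow> 's) \<Rightarrow> ('p \<Rightarrow> 's) \<Rightarrow> bool" where
  "deploy_arc I S u s s' \<longleftrightarrow> s \<in> profiles I S \<and> s' \<in> profiles I S \<and> s' \<noteq> s \<and>
     (\<exists>i\<in>I. s' = s(i := s' i) \<and> u i s' \<ge> u i s)"

definition reachable :: "'p set \<Rightarrow> ('p \<Rightarrow> 's set) \<Rightarrow> ('p \<Rightarrow> ('p \<Rightarrow> 's) \<Rightarrow> real) \<Rightarrow> ('p \<Rightarrow> 's) \<Rightarrow> ('p \<Rightarrow> 's) \<Rightarrow> bool" where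
  "reachable I S u = (deploy_arc I S u)\<^sup>*\<^sup>*"

definition strictly_above :: "'p set \<Rightarrow> ('p \<Rightarrow> 's set) \<Rightarrow> ('p \<Rightarrow> ('p \<Rightarrow> 's) \<Rightarrow> real) \<Rightarrow> ('p \<Rightarrow> 's) \<Rightarrow> ('p \<Rightarrow> 's) \<Rightarrow> bool" where
  "strictly_above I S u s s' \<longleftrightarrow> reachable I S u s' s \<and> \<not> reachable I S u s s'"

definition strongly_maximal :: "'p set \<Rightarrow> ('p \<Rightarrow> 's set) \<Rightarrow> ('p \<Rightarrow> ('p \<Rightarrow> 's) \<Rightarrow> real) \<Rightarrow> ('p \<Rightarrow> 's) \<Rightarrow> bool" where
  "strongly_maximal I S u s \<longleftrightarrow> s \<in> profiles I S \<and> \<not> (\<exists>t\<in>profiles I S. strictly_above I S u t s)"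

definition communicate :: "'p set \<Rightarrow> ('p \<Rightarrow> 's set) \<Rightarrow> ('p \<Rightarrow> ('p \<Rightarrow> 's) \<Rightarrow> real) \<Rightarrow> ('p \<Rightarrow> 's) \<Rightarrow> ('p \<Rightarrow> 's) \<Rightarrow> bool" where
  "communicate I S u s t \<longleftrightarrow> reachable I S u s t \<and> reachable I S u t s"

definition strongly_maximal_equilibrium :: "'p set \<Rightarrow> ('p \<Rightarrow> 's set) \<Rightarrow> ('p \<Rightarrow> ('p \<Rightarrow> 's) \<Rightarrow> real) \<Rightarrow> ('p \<Rightarrow> 's) \<Rightarrow> bool" where
  "strongly_maximal_equilibrium I S u s \<longleftrightarrow> strongly_maximal I S u s \<and>
     (\<forall>t. communicate I S u s t \<longrightarrow> is_pure_nash I S u t)"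

definition SME :: "'p set \<Rightarrow> ('p \<Rightarrow> 's set) \<Rightarrow> ('p \<Rightarrow> ('p \<Rightarrow> 's) \<Rightarrow> real) \<Rightarrow> ('p \<Rightarrow> 's) set" where
  "SME I S u = {s. strongly_maximal_equilibrium I S u s}"

text \<open>Payoffs of the reduced game Gamma^{J,s}: w j sigma = u j (sigma, s_{-J}).
 Player set J, same strategy sets S.\<close>
definition reduced_payoff :: "'p set \<Rightarrow> ('p \<Rightarrow> 's) \<Rightarrow> ('p \<Rightarrow> ('p \<Rightarrow> 's) \<Rightarrow> real) \<Rightarrow> 'p \<Rightarrow> ('p \<Rightarrow> 's) \<Rightarrow> real" where
  "reduced_payoff J s u j \<sigma> = u j (\<lambda>k. if k \<in> J then \<sigma> k else s k)"

end

theory Submission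
  imports Defs
begin

text \<open>In a finite game, a profile whose reachable set has minimal cardinality is strongly
maximal. In an ordinal potential game the potential never decreases along arcs, while an
improving deviation raises it strictly; so from a strongly maximal state, which every reachable
profile can return to, no reachable profile admits an improving deviation, and strongly maximal
states are exactly the strongly maximal equilibria. With one player, arcs are weak payoff
improvements. For a reduced game, fixing the outsiders at s embeds its deployment graph into
the original one and transports the potential; hence every profile reachable from the
restriction of s is an equilibrium, and arcs out of equilibria can be reversed.\<close>

lemma profiles_fun_upd:
  "s \<in> profiles I S \<Longrightarrow> i \<in> I \<Longrightarrow> a \<in> S i \<Longrightarrow> s(i := a) \<in> profiles I S"
  unfolding profiles_def using PiE_fun_upd[of a S i s I] by (simp add: insert_absorb)

lemma profiles_memberD: "s \<in> profiles I S \<Longrightarrow> i \<in> I \<Longrightarrow> s i \<in> S i"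
  unfolding profiles_def by auto

lemma deploy_arc_profiles: "deploy_arc I S u s t \<Longrightarrow> s \<in> profiles I S \<and> t \<in> profiles I S"
  unfolding deploy_arc_def by blast

lemma deploy_arcI:
  assumes "s \<in> profiles I S" "i \<in> I" "a \<in> S i" "a \<noteq> s i" "u i s \<le> u i (s(i := a))"
  shows "deploy_arc I S u s (s(i := a))"
  using assms profiles_fun_upd[of s I S i a] unfolding deploy_arc_def
  by (auto simp: fun_upd_idem_iff)

lemma deploy_arcE:
  assumes "deploy_arc I S u s t"
  obtains i where "i \<in> I" "t i \<in> S i" "t i \<noteq> s i" "t = s(i := t i)" "u i s \<le> u i t"
  using assms unfolding deploy_arc_def
  by (metis fun_upd_idem_iff profiles_memberD)

lemma reachable_profiles: "reachable I S u s t \<Longrightarrow> s \<in> profiles I S \<Longrightarrow> t \<in> profiles I S"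
  unfolding reachable_def by (induction rule: rtranclp_induct) (auto dest: deploy_arc_profiles)

lemma reachable_trans: "reachable I S u s t \<Longrightarrow> reachable I S u t r \<Longrightarrow> reachable I S u s r"
  unfolding reachable_def by auto

lemma reachable_deploy_arc: "deploy_arc I S u s t \<Longrightarrow> reachable I S u s t"
  unfolding reachable_def by auto

lemma strongly_maximal_iff:
  "strongly_maximal I S u s \<longleftrightarrow>
     s \<in> profiles I S \<and> (\<forall>t. reachable I S u s t \<longrightarrow> reachable I S u t s)"
  unfolding strongly_maximal_def strictly_above_def using reachable_profiles by blast

lemma reachable_map:
  assumes "\<And>a b. deploy_arc I S u a b \<Longrightarrow> deploy_arc I' S' u' (f a) (f b)"
    and "reachable I S u x y"
  shows "reachable I' S' u' (f x) (f y)"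
  using assms(2) unfolding reachable_def
  by (induction rule: rtranclp_induct) (auto intro: rtranclp.rtrancl_into_rtrancl assms(1))

lemma strongly_maximal_exists:
  assumes "finite_game I S"
  obtains s where "strongly_maximal I S u s"
proof -
  have fin: "finite (profiles I S)" and ne: "profiles I S \<noteq> {}"
    using assms unfolding finite_game_def profiles_def by (auto simp: finite_PiE PiE_eq_empty_iff)
  define R where "R t = {r. reachable I S u t r}" for t
  obtain s where s: "s \<in> profiles I S" and min: "\<And>t. t \<in> profiles I S \<Longrightarrow> card (R s) \<le> card (R t)"
    using ex_has_least_nat[of "\<lambda>x. x \<in> profiles I S" _ "\<lambda>t. card (R t)"] ne by blast
  have "reachable I S u t s" if st: "reachable I S u s t" for t
  proof -
    have "R t \<subseteq> R s"
      unfolding R_def using reachable_trans[OF st] by blast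
    moreover have "finite (R s)"
      using fin reachable_profiles[OF _ s] unfolding R_def by (auto intro: finite_subset)
    moreover have "card (R s) \<le> card (R t)"
      using min reachable_profiles[OF st s] .
    ultimately have "R t = R s" by (simp add: card_seteq)
    moreover have "s \<in> R s" unfolding R_def reachable_def by simp
    ultimately show ?thesis unfolding R_def by blast
  qed
  with s show thesis using that strongly_maximal_iff by blast
qed

lemma ordinal_potential_deviation:
  assumes "ordinal_potential I S u P" "s \<in> profiles I S" "i \<in> I" "a \<in> S i"
  shows "u i s < u i (s(i := a)) \<longleftrightarrow> P s < P (s(i := a))"
    and "u i s \<le> u i (s(i := a)) \<longleftrightarrow> P s \<le> P (s(i := a))"
proof -
  have "s i \<in> S i"
    using assms(2,3) by (rule profiles_memberD)
  then have "u i (s(i := b)) < u i (s(i := c)) \<longleftrightarrow> P (s(i := b)) < P (s(i := c))"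
    if "{b, c} = {s i, a}" for b c
    using assms that unfolding ordinal_potential_def by (metis doubleton_eq_iff)
  from this[of "s i" a] this[of a "s i"] show
    "u i s < u i (s(i := a)) \<longleftrightarrow> P s < P (s(i := a))"
    "u i s \<le> u i (s(i := a)) \<longleftrightarrow> P s \<le> P (s(i := a))"
    by (auto simp: not_less[symmetric])
qed

lemma ordinal_potential_mono_deploy_arc:
  assumes "ordinal_potential I S u P" "deploy_arc I S u t t'"
  shows "P t \<le> P t'"
proof -
  obtain i where i: "i \<in> I" "t' i \<in> S i" "t' i \<noteq> t i" "t' = t(i := t' i)" "u i t \<le> u i t'"
    using assms(2) by (rule deploy_arcE)
  then show ?thesis
    using ordinal_potential_deviation(2)[OF assms(1) _ i(1,2)] deploy_arc_profiles[OF assms(2)]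
    by metis
qed

lemma ordinal_potential_mono_reachable:
  assumes "ordinal_potential I S u P" "reachable I S u s t"
  shows "P s \<le> P t"
  using assms(2) unfolding reachable_def
  by (induction rule: rtranclp_induct)
    (auto dest: ordinal_potential_mono_deploy_arc[OF assms(1)] intro: order_trans)

lemma strongly_maximal_reachable_pure_nash:
  assumes pot: "ordinal_potential I S u P" and sm: "strongly_maximal I S u s"
    and st: "reachable I S u s t"
  shows "is_pure_nash I S u t"
proof -
  have t: "t \<in> profiles I S"
    using sm st reachable_profiles strongly_maximal_iff by blast
  have "u i (t(i := a)) \<le> u i t" if i: "i \<in> I" and a: "a \<in> S i" for i a
  proof (rule ccontr)
    assume "\<not> ?thesis"
    then have "u i t \<le> u i (t(i := a))" "a \<noteq> t i" by auto
    then have "reachable I S u s (t(i := a))"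
      using reachable_trans[OF st reachable_deploy_arc[OF deploy_arcI[OF t i a]]] by blast
    then have "reachable I S u (t(i := a)) t"
      using sm st strongly_maximal_iff reachable_trans by blast
    then have "P (t(i := a)) \<le> P t"
      by (rule ordinal_potential_mono_reachable[OF pot])
    with \<open>\<not> ?thesis\<close> show False
      using ordinal_potential_deviation(1)[OF pot t i a] by simp
  qed
  with t show ?thesis unfolding is_pure_nash_def by blast
qed

lemma SME_eq_strongly_maximal:
  assumes "ordinal_potential I S u P"
  shows "SME I S u = {s. strongly_maximal I S u s}"
  unfolding SME_def strongly_maximal_equilibrium_def communicate_def
  using strongly_maximal_reachable_pure_nash[OF assms] by blast

lemma deploy_arc_reverse_pure_nash:
  assumes "is_pure_nash I S u s" "deploy_arc I S u s t"
  shows "deploy_arc I S u t s"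
proof -
  obtain i where i: "i \<in> I" "t i \<in> S i" "t i \<noteq> s i" "t = s(i := t i)" "u i s \<le> u i t"
    using assms(2) by (rule deploy_arcE)
  have "u i t \<le> u i s"
    using assms(1) i unfolding is_pure_nash_def by metis
  moreover have "s = t(i := s i)" "s i \<in> S i"
    using i(4) profiles_memberD[of s I S i] assms(1) i(1)
    unfolding is_pure_nash_def by (metis fun_upd_upd fun_upd_triv)+
  ultimately show ?thesis
    using deploy_arcI[of t I S i "s i" u] deploy_arc_profiles[OF assms(2)] i by auto
qed

lemma strongly_maximal_if_reachable_pure_nash:
  assumes "s \<in> profiles I S" and "\<And>t. reachable I S u s t \<Longrightarrow> is_pure_nash I S u t"
  shows "strongly_maximal I S u s"
proof -
  have "reachable I S u t s" if "reachable I S u s t" for t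
    using that unfolding reachable_def
  proof (induction rule: rtranclp_induct)
    case (step t t')
    then have "deploy_arc I S u t' t"
      using assms(2) deploy_arc_reverse_pure_nash unfolding reachable_def by blast
    with step.IH show ?case by (simp add: converse_rtranclp_into_rtranclp)
  qed simp
  with assms(1) show ?thesis unfolding strongly_maximal_iff by blast
qed

lemma profiles_singleton_eq: "s \<in> profiles {i} S \<Longrightarrow> t \<in> profiles {i} S \<Longrightarrow> t = s(i := t i)"
  unfolding profiles_def by (rule ext) (metis PiE_arb fun_upd_apply singletonD)

lemma reachable_singleton_payoff_mono: "reachable {i} S u s t \<Longrightarrow> u i s \<le> u i t"
  unfolding reachable_def
  by (induction rule: rtranclp_induct) (auto elim: deploy_arcE)

lemma reachable_singleton_if_payoff_le:
  assumes "s \<in> profiles {i} S" "t \<in> profiles {i} S" "u i s \<le> u i t"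
  shows "reachable {i} S u s t"
proof (cases "t = s")
  case False
  then have "deploy_arc {i} S u s t"
    using assms profiles_singleton_eq[OF assms(1,2)] unfolding deploy_arc_def by auto
  then show ?thesis by (rule reachable_deploy_arc)
qed (simp add: reachable_def)

lemma strongly_maximal_singleton_iff:
  "strongly_maximal {i} S u s \<longleftrightarrow> s \<in> profiles {i} S \<and> (\<forall>t\<in>profiles {i} S. u i t \<le> u i s)"
  unfolding strongly_maximal_iff
  using reachable_singleton_payoff_mono reachable_singleton_if_payoff_le reachable_profiles
  by (metis linorder_le_cases)

definition extend_profile :: "'p set \<Rightarrow> ('p \<Rightarrow> 's) \<Rightarrow> ('p \<Rightarrow> 's) \<Rightarrow> 'p \<Rightarrow> 's" where
  "extend_profile J s \<sigma> = (\<lambda>k. if k \<in> J then \<sigma> k else s k)"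

lemma reduced_payoff_eq: "reduced_payoff J s u j \<sigma> = u j (extend_profile J s \<sigma>)"
  unfolding reduced_payoff_def extend_profile_def ..

lemma extend_profile_fun_upd:
  "j \<in> J \<Longrightarrow> extend_profile J s (\<sigma>(j := a)) = (extend_profile J s \<sigma>)(j := a)"
  unfolding extend_profile_def by auto

lemma extend_profile_restrict: "extend_profile J s (restrict s J) = s"
  unfolding extend_profile_def by auto

lemma extend_profile_in_profiles:
  "J \<subseteq> I \<Longrightarrow> s \<in> profiles I S \<Longrightarrow> \<sigma> \<in> profiles J S \<Longrightarrow> extend_profile J s \<sigma> \<in> profiles I S"
  unfolding extend_profile_def profiles_def PiE_iff extensional_def by auto

lemma restrict_in_profiles: "J \<subseteq> I \<Longrightarrow> s \<in> profiles I S \<Longrightarrow> restrict s J \<in> profiles J S"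
  unfolding profiles_def by auto

context
  fixes I J :: "'p set" and S :: "'p \<Rightarrow> 's set" and u :: "'p \<Rightarrow> ('p \<Rightarrow> 's) \<Rightarrow> real"
    and s :: "'p \<Rightarrow> 's"
  assumes J: "J \<subseteq> I" and s: "s \<in> profiles I S"
begin

lemma ordinal_potential_reduced:
  "ordinal_potential I S u P \<Longrightarrow>
     ordinal_potential J S (reduced_payoff J s u) (P \<circ> extend_profile J s)"
  unfolding ordinal_potential_def
proof (intro ballI)
  fix j a b \<sigma>
  assume pot: "\<forall>i\<in>I. \<forall>a\<in>S i. \<forall>b\<in>S i. \<forall>\<sigma>\<in>profiles I S.
      u i (\<sigma>(i := a)) > u i (\<sigma>(i := b)) \<longleftrightarrow> P (\<sigma>(i := a)) > P (\<sigma>(i := b))"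
    and j: "j \<in> J" and "a \<in> S j" "b \<in> S j" and "\<sigma> \<in> profiles J S"
  then have "u j ((extend_profile J s \<sigma>)(j := a)) > u j ((extend_profile J s \<sigma>)(j := b)) \<longleftrightarrow>
      P ((extend_profile J s \<sigma>)(j := a)) > P ((extend_profile J s \<sigma>)(j := b))"
    using J s extend_profile_in_profiles by blast
  then show "reduced_payoff J s u j (\<sigma>(j := a)) > reduced_payoff J s u j (\<sigma>(j := b)) \<longleftrightarrow>
      (P \<circ> extend_profile J s) (\<sigma>(j := a)) > (P \<circ> extend_profile J s) (\<sigma>(j := b))"
    by (simp add: reduced_payoff_eq extend_profile_fun_upd[OF j])
qed

lemma deploy_arc_reduced:
  assumes "deploy_arc J S (reduced_payoff J s u) \<sigma> \<tau>"
  shows "deploy_arc I S u (extend_profile J s \<sigma>) (extend_profile J s \<tau>)"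
proof -
  obtain j where j: "j \<in> J" "\<tau> j \<in> S j" "\<tau> j \<noteq> \<sigma> j" "\<tau> = \<sigma>(j := \<tau> j)"
      "reduced_payoff J s u j \<sigma> \<le> reduced_payoff J s u j \<tau>"
    using assms by (rule deploy_arcE)
  have \<sigma>: "extend_profile J s \<sigma> \<in> profiles I S"
    using deploy_arc_profiles[OF assms] J s extend_profile_in_profiles by blast
  have "extend_profile J s \<tau> = extend_profile J s (\<sigma>(j := \<tau> j))"
    using j(4) by (rule arg_cong)
  also have "\<dots> = (extend_profile J s \<sigma>)(j := \<tau> j)"
    using j(1) by (rule extend_profile_fun_upd)
  finally have \<tau>: "extend_profile J s \<tau> = (extend_profile J s \<sigma>)(j := \<tau> j)" .
  have "deploy_arc I S u (extend_profile J s \<sigma>) ((extend_profile J s \<sigma>)(j := \<tau> j))"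
  proof (rule deploy_arcI[OF \<sigma> _ j(2)])
    show "j \<in> I" using j(1) J by blast
    show "\<tau> j \<noteq> extend_profile J s \<sigma> j"
      using j(1,3) unfolding extend_profile_def by simp
    show "u j (extend_profile J s \<sigma>) \<le> u j ((extend_profile J s \<sigma>)(j := \<tau> j))"
      using j(5) \<tau> unfolding reduced_payoff_eq by simp
  qed
  with \<tau> show ?thesis by simp
qed

lemma is_pure_nash_reduced:
  assumes "\<sigma> \<in> profiles J S" and nash: "is_pure_nash I S u (extend_profile J s \<sigma>)"
  shows "is_pure_nash J S (reduced_payoff J s u) \<sigma>"
  unfolding is_pure_nash_def
proof (intro conjI ballI)
  fix j a assume j: "j \<in> J" and "a \<in> S j"
  then have "u j ((extend_profile J s \<sigma>)(j := a)) \<le> u j (extend_profile J s \<sigma>)"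
    using nash J unfolding is_pure_nash_def by blast
  then show "reduced_payoff J s u j (\<sigma>(j := a)) \<le> reduced_payoff J s u j \<sigma>"
    by (simp add: reduced_payoff_eq extend_profile_fun_upd[OF j])
qed fact

lemma SME_reduced:
  assumes "ordinal_potential I S u P" "s \<in> SME I S u"
  shows "restrict s J \<in> SME J S (reduced_payoff J s u)"
proof -
  have sm: "strongly_maximal I S u s"
    using assms(2) SME_eq_strongly_maximal[OF assms(1)] by blast
  have sJ: "restrict s J \<in> profiles J S"
    using restrict_in_profiles[OF J s] .
  have "is_pure_nash J S (reduced_payoff J s u) \<tau>"
    if "reachable J S (reduced_payoff J s u) (restrict s J) \<tau>" for \<tau>
  proof (rule is_pure_nash_reduced)
    show "\<tau> \<in> profiles J S"
      using reachable_profiles[OF that sJ] .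
    have "reachable I S u (extend_profile J s (restrict s J)) (extend_profile J s \<tau>)"
      using reachable_map[where f = "extend_profile J s", OF deploy_arc_reduced that] .
    then show "is_pure_nash I S u (extend_profile J s \<tau>)"
      unfolding extend_profile_restrict by (rule strongly_maximal_reachable_pure_nash[OF assms(1) sm])
  qed
  then have "strongly_maximal J S (reduced_payoff J s u) (restrict s J)"
    using strongly_maximal_if_reachable_pure_nash[OF sJ] by blast
  then show ?thesis
    using SME_eq_strongly_maximal[OF ordinal_potential_reduced[OF assms(1)]] by blast
qed

end

lemma finite_game_subset: "finite_game I S \<Longrightarrow> J \<subseteq> I \<Longrightarrow> finite_game J S"
  unfolding finite_game_def by (auto intro: finite_subset)

theorem theorem3:
  shows "(\<forall>(I::'p set) (S::'p \<Rightarrow> 's set) u. ordinal_potential_game I S u \<longrightarrow> SME I S u \<noteq> {})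
       \<and> (\<forall>(i::'p) (S::'p \<Rightarrow> 's set) u. ordinal_potential_game {i} S u \<longrightarrow>
             SME {i} S u = {s \<in> profiles {i} S. \<forall>t\<in>profiles {i} S. u i t \<le> u i s})
       \<and> (\<forall>(I::'p set) (S::'p \<Rightarrow> 's set) u J s.
             ordinal_potential_game I S u \<and> J \<noteq> {} \<and> J \<subset> I \<and> s \<in> SME I S u \<longrightarrow>
               ordinal_potential_game J S (reduced_payoff J s u) \<and>
               restrict s J \<in> SME J S (reduced_payoff J s u))"
proof (intro conjI allI impI; (elim conjE)?)
  fix I :: "'p set" and S :: "'p \<Rightarrow> 's set" and u
  assume "ordinal_potential_game I S u"
  then obtain P where P: "ordinal_potential I S u P" and fin: "finite_game I S"
    unfolding ordinal_potential_game_def by blast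
  obtain s where "strongly_maximal I S u s"
    using fin by (rule strongly_maximal_exists)
  then show "SME I S u \<noteq> {}"
    unfolding SME_eq_strongly_maximal[OF P] by blast
next
  fix i :: 'p and S :: "'p \<Rightarrow> 's set" and u
  assume "ordinal_potential_game {i} S u"
  then obtain P where "ordinal_potential {i} S u P"
    unfolding ordinal_potential_game_def by blast
  then show "SME {i} S u = {s \<in> profiles {i} S. \<forall>t\<in>profiles {i} S. u i t \<le> u i s}"
    by (simp add: SME_eq_strongly_maximal strongly_maximal_singleton_iff)
next
  fix I J :: "'p set" and S :: "'p \<Rightarrow> 's set" and u s
  assume "ordinal_potential_game I S u" and "J \<subset> I" and sme: "s \<in> SME I S u"
  then obtain P where P: "ordinal_potential I S u P" and fin: "finite_game I S" and J: "J \<subseteq> I"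
    unfolding ordinal_potential_game_def by blast
  have s: "s \<in> profiles I S"
    using sme unfolding SME_eq_strongly_maximal[OF P] strongly_maximal_def by blast
  show "ordinal_potential_game J S (reduced_payoff J s u)"
    unfolding ordinal_potential_game_def
    using finite_game_subset[OF fin J] ordinal_potential_reduced[OF J s P] by blast
  show "restrict s J \<in> SME J S (reduced_payoff J s u)"
    using SME_reduced[OF J s P sme] .
qed

end
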